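(* For $n\ge 3$ and every $i\in\{1,\dots,n\}$, $P_n(x_1,\dots,x_{i-1},1,x_{i+1},\dots,x_n)=C_{n-1}(x_1,\dots,x_{i-1},x_{i+1},\dots,x_n)=P_{n-1}(x_1,\dots,x_{i-1},x_{i+1},\dots,x_n)^2$.
   Context: Let $x_1,\dots,x_n$ be algebraically independent indeterminates over $\mathbb{Q}$; in an algebraic closure fix $y_j$ with $y_j^2=1-x_j^2$. For indices $i_1<\dots<i_m$, $\mathrm{EC}_m(x_{i_1},\dots,x_{i_m})=\sum_{S\subseteq\{i_1,\dots,i_m\},\ |S|\text{ even}}(-1)^{|S|/2}\prod_{j\in S}y_j\prod_{j\notin S}x_j$. For $k\ge 1$, $C_k(x_1,\dots,x_k)=\prod_{\sigma\in G_k}(\sigma(\mathrm{EC}_k(x_1,\dots,x_k))-1)$, where $G_k$ is the Galois group of $\mathbb{Q}(x_1,\dots,x_k,\ y_iy_j:1\le i<j\le k)$ over $\mathbb{Q}(x_1,\dots,x_k)$. $P_1=x_1-1$ and for $k\ge 2$, $P_k(x_1,\dots,x_k)=\prod_{\sigma\in G_{k-1}}(x_k-\sigma(\mathrm{EC}_{k-1}(x_1,\dots,x_{k-1})))$; these are polynomials with rational coefficients, and by the same formulas they are evaluated at any list of variables (renaming $x_j,y_j$ accordingly). *)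

theory Defs
  imports Complex_Main
begin

text \<open>Polynomials with rational coefficients in several variables are rendered as
  the complex polynomial functions they induce (an identity of rational polynomials
  holds iff the induced functions on complex points agree).  A list xs of length m
  is the point (x_1,...,x_m); the auxiliary y_j is a fixed square root of 1 - x_j^2.\<close>

definition ysq :: "complex \<Rightarrow> complex" where
  "ysq x = csqrt (1 - x^2)"

text \<open>EC_m with arbitrary values ys j substituted for y_{j+1} (0-based indexing).\<close>
definition EC_gen :: "(nat \<Rightarrow> complex) \<Rightarrow> complex list \<Rightarrow> complex" where
  "EC_gen ys xs =
     (\<Sum>S\<in>{S. S \<subseteq> {..<length xs} \<and> even (card S)}.
        (-1) ^ (card S div 2) * (\<Prod>j\<in>S. ys j) * (\<Prod>j\<in>{..<length xs} - S. xs ! j))"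

definition EC :: "complex list \<Rightarrow> complex" where
  "EC xs = EC_gen (\<lambda>j. ysq (xs ! j)) xs"

text \<open>The Galois group G_k of Q(x_1..x_k, y_i y_j) over Q(x_1..x_k) acts by
  y_j \<mapsto> e_j y_j for sign vectors e in {1,-1}^k, with e and -e giving the same
  automorphism.  We index G_k by the representatives with e_0 = 1 (one per
  automorphism; for k = 1 this is the trivial group).\<close>
definition galois_signs :: "nat \<Rightarrow> (nat \<Rightarrow> complex) set" where
  "galois_signs k = {e. e 0 = 1 \<and> (\<forall>j. e j = 1 \<or> e j = -1) \<and> (\<forall>j\<ge>k. e j = 1)}"

text \<open>sigma(EC_k(xs)) for the automorphism sigma represented by e.\<close>
definition EC_act :: "(nat \<Rightarrow> complex) \<Rightarrow> complex list \<Rightarrow> complex" where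
  "EC_act e xs = EC_gen (\<lambda>j. e j * ysq (xs ! j)) xs"

definition C :: "complex list \<Rightarrow> complex" where
  "C xs = (\<Prod>e\<in>galois_signs (length xs). EC_act e xs - 1)"

definition P :: "complex list \<Rightarrow> complex" where
  "P xs = (if length xs = 1 then xs ! 0 - 1
           else (\<Prod>e\<in>galois_signs (length xs - 1). last xs - EC_act e (butlast xs)))"

end

theory Submission imports Defs begin

text \<open>Put w_j = x_j + i y_j, so that x_j - i y_j = 1/w_j and x_j = J(w_j) for the Joukowski map
  J(z) = (z + 1/z)/2.  Expanding the two products shows EC_k = J(w_1 \<cdots> w_k), and a Galois
  conjugate replaces w_j by w_j^{\<plusminus>1}.  Splitting the conjugates according to the sign of
  the last coordinate x_n = J(w) pairs the factors of C_n as (J(Aw) - 1)(J(A/w) - 1), which is the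
  square (J(w) - J(A))^2; hence C_n = P_n^2.  A coordinate equal to 1 has w = 1, so it contributes
  the same factor for both of its signs, and removing it squares the product of any function H
  of \<Prod>w_j^{e_j}.  For this to survive the normalisation e_1 = 1 of the Galois group, H must be
  invariant under z \<mapsto> 1/z, as z \<mapsto> x - J(z) is; the induction peels off the last
  coordinate into H, which preserves that invariance.\<close>

lemma i_power_plus_minus_i_power:
  "(\<i> ^ c + (-\<i>) ^ c) / 2 = (if even c then (-1) ^ (c div 2) else (0::complex))"
proof (cases "even c")
  case True
  then obtain d where c: "c = 2*d" by blast
  have "\<i> ^ c = (-1)^d" "(-\<i>)^c = (-1)^d" unfolding c power_mult by simp_all
  then show ?thesis using True c by simp
next
  case False
  then have "(-\<i>)^c = - (\<i>^c)" by (simp add: power_minus_odd)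
  then show ?thesis using False by simp
qed

lemma prod_plus_i_expand:
  fixes s :: complex
  assumes "finite A"
  shows "(\<Prod>j\<in>A. x j + s * y j) = (\<Sum>B\<in>Pow A. s ^ card B * (\<Prod>j\<in>B. y j) * (\<Prod>j\<in>A-B. x j))"
proof -
  have "(\<Prod>j\<in>A. x j + s * y j) = (\<Sum>B\<in>Pow A. (\<Prod>j\<in>B. s * y j) * (\<Prod>j\<in>A-B. x j))"
    using prod_add[OF assms, of "\<lambda>j. s * y j" x] by (simp add: add.commute)
  then show ?thesis by (simp only: prod.distrib prod_constant)
qed

lemma EC_gen_eq_half_sum:
  "EC_gen ys xs = ((\<Prod>j<length xs. xs!j + \<i>*ys j) + (\<Prod>j<length xs. xs!j - \<i>*ys j)) / 2"
proof -
  define A where "A = {..<length xs}"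
  have fin: "finite A" by (simp add: A_def)
  have plus: "(\<Prod>j\<in>A. xs!j + \<i>*ys j) = (\<Sum>B\<in>Pow A. \<i>^card B * (\<Prod>j\<in>B. ys j) * (\<Prod>j\<in>A-B. xs!j))"
    by (rule prod_plus_i_expand[OF fin])
  have "(\<Prod>j\<in>A. xs!j - \<i>*ys j) = (\<Prod>j\<in>A. xs!j + (-\<i>)*ys j)" by simp
  also have "\<dots> = (\<Sum>B\<in>Pow A. (-\<i>)^card B * (\<Prod>j\<in>B. ys j) * (\<Prod>j\<in>A-B. xs!j))"
    by (rule prod_plus_i_expand[OF fin])
  finally have minus: "(\<Prod>j\<in>A. xs!j - \<i>*ys j) = \<dots>" .
  have "((\<Prod>j\<in>A. xs!j + \<i>*ys j) + (\<Prod>j\<in>A. xs!j - \<i>*ys j)) / 2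
     = (\<Sum>B\<in>Pow A. ((\<i>^card B + (-\<i>)^card B)/2) * ((\<Prod>j\<in>B. ys j) * (\<Prod>j\<in>A-B. xs!j)))"
    unfolding plus minus sum.distrib[symmetric] sum_divide_distrib
    by (intro sum.cong) (auto simp: field_simps)
  also have "\<dots> = (\<Sum>B\<in>Pow A. if even (card B)
                     then (-1) ^ (card B div 2) * (\<Prod>j\<in>B. ys j) * (\<Prod>j\<in>A-B. xs!j) else 0)"
    unfolding i_power_plus_minus_i_power by (rule sum.cong) auto
  also have "\<dots> = (\<Sum>B\<in>{B\<in>Pow A. even (card B)}.
                     (-1) ^ (card B div 2) * (\<Prod>j\<in>B. ys j) * (\<Prod>j\<in>A-B. xs!j))"
    by (rule sum.inter_filter[symmetric]) (simp add: A_def)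
  also have "\<dots> = EC_gen ys xs" unfolding EC_gen_def A_def by (rule sum.cong) auto
  finally show ?thesis unfolding A_def by simp
qed

definition joukowski :: "complex \<Rightarrow> complex" where
  "joukowski z = (z + inverse z) / 2"

lemma joukowski_inverse: "joukowski (inverse z) = joukowski z"
  unfolding joukowski_def by (simp add: add.commute)

lemma joukowski_pair_identity:
  assumes "A \<noteq> 0" "W \<noteq> 0"
  shows "(joukowski (A*W) - 1) * (joukowski (A * inverse W) - 1) = (joukowski W - joukowski A)^2"
proof -
  have "joukowski (A*W) - 1 = (A*W-1)^2/(2*A*W)"
   and "joukowski (A * inverse W) - 1 = (A-W)^2/(2*A*W)"
   and "joukowski W - joukowski A = (W-A)*(A*W-1)/(2*A*W)"
    using assms unfolding joukowski_def by (simp_all add: field_simps power2_eq_square)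
  note factors = this
  show ?thesis unfolding factors using assms by (simp add: field_simps power2_eq_square)
qed

lemma sign_factor_mult_conj:
  assumes "s = 1 \<or> s = -1"
  shows "(x + \<i> * s * ysq x) * (x - \<i> * s * ysq x) = 1"
proof -
  have "(x + \<i> * s * ysq x) * (x - \<i> * s * ysq x) = x^2 + s^2 * (ysq x)^2"
    by (simp add: algebra_simps power2_eq_square)
  then show ?thesis using assms by (auto simp: ysq_def)
qed

lemma sign_factor_conj_eq_inverse:
  "s = 1 \<or> s = -1 \<Longrightarrow> x - \<i> * s * ysq x = inverse (x + \<i> * s * ysq x)"
  using sign_factor_mult_conj[of s x] by (metis inverse_unique mult.commute)

lemma sign_factor_nonzero: "s = 1 \<or> s = -1 \<Longrightarrow> x + \<i> * s * ysq x \<noteq> 0"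
  using sign_factor_mult_conj[of s x] by auto

text \<open>In the notation above, sign_prod e xs is the product of the w_j^{e_j}.\<close>
definition sign_prod :: "(nat \<Rightarrow> complex) \<Rightarrow> complex list \<Rightarrow> complex" where
  "sign_prod e xs = (\<Prod>j<length xs. xs!j + \<i> * e j * ysq (xs!j))"

definition uniformizer :: "complex \<Rightarrow> complex" where
  "uniformizer c = c + \<i> * ysq c"

lemma uniformizer_nonzero: "uniformizer c \<noteq> 0"
  using sign_factor_nonzero[of 1 c] by (simp add: uniformizer_def)

lemma uniformizer_one [simp]: "uniformizer 1 = 1"
  by (simp add: uniformizer_def ysq_def)

lemma inverse_uniformizer: "inverse (uniformizer c) = c - \<i> * ysq c"
  using sign_factor_conj_eq_inverse[of 1 c] by (simp add: uniformizer_def)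

lemma joukowski_uniformizer: "joukowski (uniformizer c) = c"
  unfolding joukowski_def inverse_uniformizer by (simp add: uniformizer_def)

lemma sign_prod_nonzero: "\<forall>j. e j = 1 \<or> e j = -1 \<Longrightarrow> sign_prod e xs \<noteq> 0"
  unfolding sign_prod_def using sign_factor_nonzero by (simp add: prod_zero_iff)

lemma sign_prod_one [simp]: "sign_prod e [1] = 1"
  by (simp add: sign_prod_def ysq_def)

lemma sign_prod_snoc_upd:
  assumes "s = 1 \<or> s = -1"
  shows "sign_prod (e(length xs := s)) (xs @ [c])
           = sign_prod e xs * (if s = 1 then uniformizer c else inverse (uniformizer c))"
proof -
  have "sign_prod (e(length xs := s)) xs = sign_prod e xs"
    unfolding sign_prod_def by (rule prod.cong) auto
  then have "sign_prod (e(length xs := s)) (xs @ [c]) = sign_prod e xs * (c + \<i> * s * ysq c)"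
    unfolding sign_prod_def by (simp add: nth_append)
  moreover have "c + \<i> * s * ysq c = (if s = 1 then uniformizer c else inverse (uniformizer c))"
    using assms unfolding inverse_uniformizer by (auto simp: uniformizer_def)
  ultimately show ?thesis by simp
qed

lemma EC_act_eq_joukowski:
  assumes "\<forall>j. e j = 1 \<or> e j = -1"
  shows "EC_act e xs = joukowski (sign_prod e xs)"
proof -
  have "xs!j - \<i>*(e j * ysq (xs!j)) = inverse (xs!j + \<i> * e j * ysq (xs!j))" for j
    using sign_factor_conj_eq_inverse[of "e j" "xs!j"] assms by (simp add: mult.assoc)
  then have "(\<Prod>j<length xs. xs!j - \<i>*(e j * ysq (xs!j)))
      = (\<Prod>j<length xs. inverse (xs!j + \<i> * e j * ysq (xs!j)))" by simp
  also have "\<dots> = inverse (sign_prod e xs)"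
    unfolding sign_prod_def using prod_inversef[of "\<lambda>j. xs!j + \<i> * e j * ysq (xs!j)"]
    by (simp add: o_def)
  finally show ?thesis
    unfolding EC_act_def EC_gen_eq_half_sum joukowski_def sign_prod_def by (simp add: mult.assoc)
qed

lemma galois_signs_sign: "e \<in> galois_signs k \<Longrightarrow> e j = 1 \<or> e j = -1"
  unfolding galois_signs_def by auto

lemma EC_act_galois_signs:
  "e \<in> galois_signs k \<Longrightarrow> EC_act e xs = joukowski (sign_prod e xs)"
  using EC_act_eq_joukowski galois_signs_sign by blast

lemma galois_signs_one: "galois_signs (Suc 0) = {\<lambda>_. 1}"
proof (intro equalityI subsetI)
  fix e assume "e \<in> galois_signs (Suc 0)"
  then have "e j = 1" for j unfolding galois_signs_def by (cases j) auto
  then show "e \<in> {\<lambda>_. 1}" by (simp add: fun_eq_iff)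
qed (simp add: galois_signs_def)

lemma galois_signs_Suc:
  assumes "k \<ge> 1"
  shows "galois_signs (Suc k) = (\<lambda>e. e(k:=1)) ` galois_signs k \<union> (\<lambda>e. e(k:=-1)) ` galois_signs k"
proof (intro equalityI subsetI)
  fix e assume e: "e \<in> galois_signs (Suc k)"
  have "(e(k:=1)) j = 1" if "k \<le> j" for j
    using e that unfolding galois_signs_def by (cases "j = k") auto
  then have reset: "e(k:=1) \<in> galois_signs k"
    using e assms unfolding galois_signs_def by auto
  from galois_signs_sign[OF e, of k]
  show "e \<in> (\<lambda>e. e(k:=1)) ` galois_signs k \<union> (\<lambda>e. e(k:=-1)) ` galois_signs k"
  proof
    assume "e k = 1"
    then have "e = (e(k:=1))(k:=1)" by (simp add: fun_upd_idem)
    with reset show ?thesis by blast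
  next
    assume "e k = -1"
    then have "e = (e(k:=1))(k:=-1)" by (simp add: fun_upd_idem)
    with reset show ?thesis by blast
  qed
next
  fix e assume "e \<in> (\<lambda>e. e(k:=1)) ` galois_signs k \<union> (\<lambda>e. e(k:=-1)) ` galois_signs k"
  then obtain e0 s where "e0 \<in> galois_signs k" "s = 1 \<or> s = -1" "e = e0(k := s)" by blast
  then show "e \<in> galois_signs (Suc k)"
    using assms unfolding galois_signs_def by auto
qed

lemma finite_galois_signs: "finite (galois_signs k)"
proof (induction k)
  case 0
  have "galois_signs 0 = {\<lambda>_. 1}" unfolding galois_signs_def by auto
  then show ?case by simp
next
  case (Suc k) then show ?case
    by (cases "k = 0") (simp_all add: galois_signs_one galois_signs_Suc)
qed

lemma prod_galois_signs_Suc: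
  assumes "k \<ge> 1"
  shows "(\<Prod>e\<in>galois_signs (Suc k). g e) = (\<Prod>e\<in>galois_signs k. g (e(k:=1)) * g (e(k:=-1)))"
proof -
  have fixed: "e k = 1" if "e \<in> galois_signs k" for e using that unfolding galois_signs_def by auto
  have inj: "inj_on (\<lambda>e. e(k:=1)) (galois_signs k)" "inj_on (\<lambda>e. e(k:=-1)) (galois_signs k)"
    by (rule inj_onI, metis fixed fun_upd_triv fun_upd_upd)+
  have disj: "(\<lambda>e. e(k:=1)) ` galois_signs k \<inter> (\<lambda>e. e(k:=-1)) ` galois_signs k = {}"
    by (auto dest: fun_cong[of _ _ k])
  show ?thesis
    unfolding galois_signs_Suc[OF assms]
    by (subst prod.union_disjoint) (simp_all add: finite_galois_signs disj prod.reindex inj prod.distrib)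
qed

lemma prod_galois_signs_snoc:
  assumes "ds \<noteq> []"
  shows "(\<Prod>e\<in>galois_signs (Suc (length ds)). g (sign_prod e (ds @ [c])))
       = (\<Prod>e\<in>galois_signs (length ds).
            g (sign_prod e ds * uniformizer c) * g (sign_prod e ds * inverse (uniformizer c)))"
  using assms by (simp add: prod_galois_signs_Suc Suc_le_eq sign_prod_snoc_upd)

lemma C_eq_P_square:
  assumes "length ys \<ge> 2"
  shows "C ys = (P ys)^2"
proof -
  obtain bs x where ys: "ys = bs @ [x]"
    using assms by (cases ys rule: rev_cases) auto
  with assms have "bs \<noteq> []" by auto
  let ?Z = "\<lambda>e. sign_prod e bs" and ?w = "uniformizer x"
  have "C ys = (\<Prod>e\<in>galois_signs (Suc (length bs)). joukowski (sign_prod e (bs @ [x])) - 1)"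
    unfolding C_def ys by (simp add: EC_act_galois_signs cong: prod.cong)
  also have "\<dots> = (\<Prod>e\<in>galois_signs (length bs).
                     (joukowski (?Z e * ?w) - 1) * (joukowski (?Z e * inverse ?w) - 1))"
    by (rule prod_galois_signs_snoc[OF \<open>bs \<noteq> []\<close>])
  also have "\<dots> = (\<Prod>e\<in>galois_signs (length bs). (x - joukowski (?Z e))^2)"
    by (intro prod.cong refl) (simp add: joukowski_pair_identity sign_prod_nonzero
        galois_signs_sign uniformizer_nonzero joukowski_uniformizer)
  also have "\<dots> = (P ys)^2"
    unfolding P_def ys using \<open>bs \<noteq> []\<close>
    by (simp add: EC_act_galois_signs prod_power_distrib cong: prod.cong)
  finally show ?thesis .
qed

lemma P_snoc_one_eq_C:
  assumes "length bs \<ge> 2"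
  shows "P (bs @ [1]) = C bs"
proof -
  obtain k where k: "length bs = Suc k" "k \<ge> 1" using assms by (cases "length bs") auto
  have "P (bs @ [1]) = (\<Prod>e\<in>galois_signs (Suc k). 1 - EC_act e bs)"
    unfolding P_def using k by simp
  also have "\<dots> = (\<Prod>e\<in>galois_signs (Suc k). EC_act e bs - 1)"
    unfolding prod_galois_signs_Suc[OF k(2)] by (rule prod.cong) (simp_all add: algebra_simps)
  finally show ?thesis unfolding C_def k(1) .
qed

lemma prod_galois_signs_snoc_one:
  assumes "cs \<noteq> []"
  shows "(\<Prod>e\<in>galois_signs (length (cs @ [1])). H (sign_prod e (cs @ [1])))
       = (\<Prod>e\<in>galois_signs (length cs). H (sign_prod e cs))^2"
  using prod_galois_signs_snoc[OF assms, of H 1] by (simp add: power2_eq_square prod.distrib)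

lemma prod_galois_signs_one_snoc:
  assumes "\<And>z. z \<noteq> 0 \<Longrightarrow> H (inverse z) = H z"
  shows "(\<Prod>e\<in>galois_signs (length [1, c]). H (sign_prod e [1, c]))
       = (\<Prod>e\<in>galois_signs (length [c]). H (sign_prod e [c]))^2"
proof -
  have "sign_prod (\<lambda>_. 1) [c] = uniformizer c"
    by (simp add: sign_prod_def uniformizer_def)
  moreover have "(\<Prod>e\<in>galois_signs (length [1, c]). H (sign_prod e [1, c]))
      = H (uniformizer c) * H (inverse (uniformizer c))"
    using prod_galois_signs_snoc[of "[1]" H c] by (simp add: galois_signs_one)
  ultimately show ?thesis
    using assms[OF uniformizer_nonzero] by (simp add: galois_signs_one power2_eq_square)
qed

lemma inversion_invariant_pair:
  fixes H :: "complex \<Rightarrow> 'a :: comm_monoid_mult" and w z :: complex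
  assumes "\<And>z. z \<noteq> 0 \<Longrightarrow> H (inverse z) = H z" "w \<noteq> 0" "z \<noteq> 0"
  shows "H (inverse z * w) * H (inverse z * inverse w) = H (z * w) * H (z * inverse w)"
proof -
  have "H (inverse z * w) = H (z * inverse w)" "H (inverse z * inverse w) = H (z * w)"
    using assms(1)[of "z * inverse w"] assms(1)[of "z * w"] assms(2,3) by (simp_all add: ac_simps)
  then show ?thesis by (simp add: mult.commute)
qed

lemma prod_galois_signs_remove_one:
  assumes "\<And>z. z \<noteq> 0 \<Longrightarrow> H (inverse z) = H z" "2 \<le> length bs" "i < length bs"
  shows "(\<Prod>e\<in>galois_signs (length bs). H (sign_prod e (bs[i:=1])))
       = (\<Prod>e\<in>galois_signs (length bs - 1). H (sign_prod e (take i bs @ drop (Suc i) bs)))^2"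
  using assms
proof (induction bs arbitrary: H i rule: rev_induct)
  case Nil then show ?case by simp
next
  case (snoc c cs)
  then have "cs \<noteq> []" by auto
  consider "i = length cs" | "i < length cs" "length cs = 1" | "i < length cs" "length cs \<ge> 2"
    using snoc.prems(2,3) by fastforce
  then show ?case
  proof cases
    case 1
    then show ?thesis using prod_galois_signs_snoc_one[OF \<open>cs \<noteq> []\<close>] by simp
  next
    case 2
    then obtain a where "cs = [a]" "i = 0" using length_Suc_conv[of cs 0] by auto
    moreover have "(\<Prod>e\<in>galois_signs (length [1, c]). H (sign_prod e [1, c]))
        = (\<Prod>e\<in>galois_signs (length [c]). H (sign_prod e [c]))^2"
      by (rule prod_galois_signs_one_snoc) (rule snoc.prems(1))
    ultimately show ?thesis by simp
  next
    case 3
    define H' where "H' z = H (z * uniformizer c) * H (z * inverse (uniformizer c))" for z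
    define R where "R = take i cs @ drop (Suc i) cs"
    have R: "R \<noteq> []" "Suc (length R) = length cs" "length R = length cs - 1"
      using 3 by (auto simp: R_def)
    have H'_inv: "H' (inverse z) = H' z" if "z \<noteq> 0" for z
      unfolding H'_def using snoc.prems(1) uniformizer_nonzero[of c] that by (rule inversion_invariant_pair)
    have "(\<Prod>e\<in>galois_signs (length (cs @ [c])). H (sign_prod e ((cs @ [c])[i := 1])))
        = (\<Prod>e\<in>galois_signs (length cs). H' (sign_prod e (cs[i := 1])))"
      using prod_galois_signs_snoc[of "cs[i := 1]" H c] 3 \<open>cs \<noteq> []\<close>
      by (simp add: H'_def list_update_append)
    also have "\<dots> = (\<Prod>e\<in>galois_signs (length cs - 1). H' (sign_prod e R))^2"
      unfolding R_def using 3 H'_inv by (intro snoc.IH) auto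
    also have "(\<Prod>e\<in>galois_signs (length cs - 1). H' (sign_prod e R))
        = (\<Prod>e\<in>galois_signs (Suc (length R)). H (sign_prod e (R @ [c])))"
      using prod_galois_signs_snoc[of R H c] R by (simp add: H'_def R(3)[symmetric])
    finally show ?thesis using 3 R by (simp add: R_def)
  qed
qed

lemma P_update_one_eq_P_square:
  assumes "length bs \<ge> 2" "i < length bs"
  shows "P ((bs @ [x])[i := 1]) = (P ((take i bs @ drop (Suc i) bs) @ [x]))^2"
proof -
  define H where "H z = x - joukowski z" for z
  have "bs \<noteq> []" using assms by auto
  have "P ((bs @ [x])[i := 1]) = (\<Prod>e\<in>galois_signs (length bs). H (sign_prod e (bs[i:=1])))"
    using assms \<open>bs \<noteq> []\<close> by (simp add: P_def H_def list_update_append EC_act_galois_signs cong: prod.cong)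
  also have "\<dots> = (\<Prod>e\<in>galois_signs (length bs - 1). H (sign_prod e (take i bs @ drop (Suc i) bs)))^2"
    by (rule prod_galois_signs_remove_one) (use assms in \<open>simp_all add: H_def joukowski_inverse\<close>)
  also have "\<dots> = (P ((take i bs @ drop (Suc i) bs) @ [x]))^2"
    using assms by (simp add: P_def H_def EC_act_galois_signs butlast_append cong: prod.cong)
  finally show ?thesis .
qed

theorem mainTheorem5:
  fixes xs :: "complex list" and i :: nat
  assumes "length xs \<ge> 3" and "i < length xs"
  shows "P (xs[i := 1]) = C (take i xs @ drop (Suc i) xs)
       \<and> C (take i xs @ drop (Suc i) xs) = (P (take i xs @ drop (Suc i) xs))^2"
proof -
  define ys where "ys = take i xs @ drop (Suc i) xs"
  have C_ys: "C ys = (P ys)^2"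
    by (rule C_eq_P_square) (use assms in \<open>simp add: ys_def\<close>)
  obtain bs x where xs: "xs = bs @ [x]" using assms by (cases xs rule: rev_cases) auto
  have "P (xs[i := 1]) = C ys"
  proof (cases "i = length bs")
    case True
    then have "xs[i := 1] = bs @ [1]" "ys = bs" by (simp_all add: xs ys_def)
    then show ?thesis using assms xs P_snoc_one_eq_C by simp
  next
    case False
    then have "i < length bs" "ys = (take i bs @ drop (Suc i) bs) @ [x]"
      using assms by (simp_all add: xs ys_def)
    then show ?thesis using assms xs P_update_one_eq_P_square C_ys by simp
  qed
  with C_ys show ?thesis unfolding ys_def by simp
qed

end
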